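(* Let $(X,d_X)$ be a metric space. If $C<1$ and $D\in[0,\infty)$ are such that $\Delta_X^{(c)}(R)\leq CR+D$ for all $R\in[0,\infty)$, then $\mathrm{diam}(X)\leq\frac{D}{1-C}$.
   Context: For a cover $\mathcal{U}$ of $X$: $\mathrm{diam}(\mathcal{U})=\sup_{U\in\mathcal{U}}\mathrm{diam}(U)$; $\mathcal{L}(\mathcal{U})=\sup\{d\in[0,\infty): \text{every } E\subseteq X \text{ with } \mathrm{diam}(E)<d \text{ is contained in some } U\in\mathcal{U}\}$; point-finite means each point lies in only finitely many members. $\Delta_X^{(c)}(R)=\inf\{\mathrm{diam}(\mathcal{U}): \mathcal{U} \text{ point-finite cover of } X,\ \mathcal{L}(\mathcal{U})\geq R\}$. *)

theory Defs
  imports "HOL-Analysis.Analysis"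
begin

definition ediam :: "'a::metric_space set \<Rightarrow> ereal" where
  "ediam E = Sup (insert 0 {ereal (dist x y) | x y. x \<in> E \<and> y \<in> E})"

definition is_cover :: "'a set \<Rightarrow> 'a set set \<Rightarrow> bool" where
  "is_cover X \<U> \<longleftrightarrow> (\<forall>U\<in>\<U>. U \<subseteq> X) \<and> \<Union>\<U> = X"

definition point_finite :: "'a set set \<Rightarrow> bool" where
  "point_finite \<U> \<longleftrightarrow> (\<forall>x. finite {U\<in>\<U>. x \<in> U})"

definition cover_diam :: "'a::metric_space set set \<Rightarrow> ereal" where
  "cover_diam \<U> = (SUP U\<in>\<U>. ediam U)"

definition lebesgue_num :: "'a::metric_space set \<Rightarrow> 'a set set \<Rightarrow> ereal" where
  "lebesgue_num X \<U> = Sup {ereal d | d. d \<ge> 0 \<and>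
      (\<forall>E. E \<subseteq> X \<longrightarrow> ediam E < ereal d \<longrightarrow> (\<exists>U\<in>\<U>. E \<subseteq> U))}"

text \<open>The function Delta^(c)_X(R); the infimum of the empty set is +infinity.\<close>
definition Delta_c :: "'a::metric_space set \<Rightarrow> real \<Rightarrow> ereal" where
  "Delta_c X R = Inf {cover_diam \<U> | \<U>. is_cover X \<U> \<and> point_finite \<U>
                                      \<and> lebesgue_num X \<U> \<ge> ereal R}"

end

theory Submission
  imports Defs
begin

text \<open>Any two points at distance \<open>t\<close> lie in a common member of a cover with Lebesgue number
  larger than \<open>t\<close>, so \<open>t\<close> is at most the diameter of that cover. Hence
  \<open>dist x y \<le> \<Delta>(R) \<le> C R + D\<close> for every \<open>R > dist x y\<close>; letting \<open>R\<close> decrease to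
  \<open>dist x y\<close> gives \<open>dist x y \<le> C dist x y + D\<close>, i.e. \<open>dist x y \<le> D / (1 - C)\<close>.\<close>

lemma ediam_pair: "ediam {x, y} = ereal (dist x y)"
proof -
  have "{ereal (dist a b) | a b. a \<in> {x, y} \<and> b \<in> {x, y}} = {0, ereal (dist x y)}"
    by (auto simp: dist_commute)
  then have "ediam {x, y} = Sup {0, ereal (dist x y)}"
    unfolding ediam_def by simp
  also have "\<dots> = ereal (dist x y)"
    by (simp add: sup_absorb2)
  finally show ?thesis .
qed

lemma dist_le_ediam: "x \<in> U \<Longrightarrow> y \<in> U \<Longrightarrow> ereal (dist x y) \<le> ediam U"
  unfolding ediam_def by (rule Sup_upper) blast

lemma ediam_le:
  assumes "b \<ge> 0" and "\<And>x y. x \<in> E \<Longrightarrow> y \<in> E \<Longrightarrow> dist x y \<le> b"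
  shows "ediam E \<le> ereal b"
  unfolding ediam_def using assms by (auto intro!: Sup_least)

lemma dist_le_cover_diam:
  assumes "x \<in> X" "y \<in> X" and "ereal (dist x y) < lebesgue_num X \<U>"
  shows "ereal (dist x y) \<le> cover_diam \<U>"
proof -
  obtain d where d: "ereal (dist x y) < ereal d"
    and covers: "\<forall>E. E \<subseteq> X \<longrightarrow> ediam E < ereal d \<longrightarrow> (\<exists>U\<in>\<U>. E \<subseteq> U)"
    using assms(3) unfolding lebesgue_num_def by (auto simp: less_Sup_iff)
  have "{x, y} \<subseteq> X" "ediam {x, y} < ereal d"
    using assms(1,2) d by (auto simp: ediam_pair)
  then obtain U where "U \<in> \<U>" "{x, y} \<subseteq> U"
    using covers by blast
  then have "ereal (dist x y) \<le> ediam U"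
    by (intro dist_le_ediam) auto
  also have "\<dots> \<le> cover_diam \<U>"
    unfolding cover_diam_def using \<open>U \<in> \<U>\<close> by (rule SUP_upper)
  finally show ?thesis .
qed

lemma dist_le_Delta_c:
  assumes "x \<in> X" "y \<in> X" and "dist x y < R"
  shows "ereal (dist x y) \<le> Delta_c X R"
  unfolding Delta_c_def
proof (rule Inf_greatest, clarify)
  fix \<U> assume "ereal R \<le> lebesgue_num X \<U>"
  moreover have "ereal (dist x y) < ereal R"
    using assms(3) by simp
  ultimately have "ereal (dist x y) < lebesgue_num X \<U>"
    by (rule less_le_trans[rotated])
  then show "ereal (dist x y) \<le> cover_diam \<U>"
    using dist_le_cover_diam assms(1,2) by blast
qed

lemma le_affine_from_right:
  fixes t C D :: real
  assumes "\<And>R. t < R \<Longrightarrow> t \<le> C * R + D"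
  shows "t \<le> C * t + D"
proof -
  have "((\<lambda>R. C * R + D) \<longlongrightarrow> C * t + D) (at_right t)"
    by (intro tendsto_intros)
  moreover have "\<forall>\<^sub>F R in at_right t. t \<le> C * R + D"
    using eventually_at_right_less[of t] by (rule eventually_mono) (rule assms)
  ultimately show ?thesis
    by (rule tendsto_lowerbound) simp
qed

theorem lemma3p5:
  fixes X :: "'a::metric_space set" and C D :: real
  assumes "C < 1" and "D \<ge> 0"
    and "\<forall>R\<ge>0. Delta_c X R \<le> ereal (C * R + D)"
  shows "ediam X \<le> ereal (D / (1 - C))"
proof (rule ediam_le)
  show "D / (1 - C) \<ge> 0"
    using assms(1,2) by simp
  fix x y assume xy: "x \<in> X" "y \<in> X"
  have "dist x y \<le> C * R + D" if "dist x y < R" for R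
  proof -
    have "ereal (dist x y) \<le> Delta_c X R"
      using xy that by (rule dist_le_Delta_c)
    also have "\<dots> \<le> ereal (C * R + D)"
      using assms(3) that zero_le_dist[of x y] by (meson order.trans less_imp_le)
    finally show ?thesis by simp
  qed
  then have "dist x y \<le> C * dist x y + D"
    by (rule le_affine_from_right)
  then show "dist x y \<le> D / (1 - C)"
    using assms(1) by (simp add: field_simps)
qed

end
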